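(* Let $\beta>2$ and $\ell(r)=r^\beta$ for $r\ge0$. Let $\Phi=\{x_i\}$ be a stationary Poisson point process of intensity $1$ on $\mathbb{R}^2$. For $\lambda>0$ let $e_\lambda=(\lambda,0)$ and let $\{F_{0\lambda},F_{i\lambda};i\ge1\}$ be positive i.i.d. random variables with common distribution $F$, independent of $\Phi$, satisfying $\int_{\mathbb{R}_+}p\,F(dp)<\infty$. Define $$\mathcal{I}(e_\lambda)=\sum_{x_i\in\Phi}\frac{F_{i\lambda}}{\ell(\|e_\lambda-x_i\|)},\qquad \mathrm{SIR}_{0\lambda}=\frac{F_{0\lambda}/\ell(\|e_\lambda\|)}{\mathcal{I}(e_\lambda)}.$$ Then $$\liminf_{c\to0+}\liminf_{\lambda\to\infty}\mathbb{P}\Big(\mathrm{SIR}_{0\lambda}\ge\frac{c}{\lambda^\beta}\Big)=1.$$ *)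

theory Defs
  imports "HOL-Probability.Probability"
begin

text \<open>A point process is given by an injective enumeration
  x 0, x 1, ... of its points; the point set is the range.\<close>

definition pts :: "(nat \<Rightarrow> 'w \<Rightarrow> real \<times> real) \<Rightarrow> 'w \<Rightarrow> (real \<times> real) set" where
  "pts x \<omega> = range (\<lambda>i. x i \<omega>)"

definition count_pts :: "(nat \<Rightarrow> 'w \<Rightarrow> real \<times> real) \<Rightarrow> (real \<times> real) set \<Rightarrow> 'w \<Rightarrow> nat" where
  "count_pts x B \<omega> = card (pts x \<omega> \<inter> B)"

definition poisson_pp :: "'w measure \<Rightarrow> (nat \<Rightarrow> 'w \<Rightarrow> real \<times> real) \<Rightarrow> bool" where
  "poisson_pp M x \<longleftrightarrow>
     prob_space M \<and>
     (\<forall>i. x i \<in> borel_measurable M) \<and>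
     (\<forall>\<omega>\<in>space M. inj (\<lambda>i. x i \<omega>)) \<and>
     (\<forall>\<omega>\<in>space M. \<forall>B. bounded B \<longrightarrow> finite (pts x \<omega> \<inter> B)) \<and>
     (\<forall>B\<in>sets borel. bounded B \<longrightarrow>
        count_pts x B \<in> measurable M (count_space UNIV) \<and>
        (\<forall>k. measure M {\<omega>\<in>space M. count_pts x B \<omega> = k}
               = measure lborel B ^ k / fact k * exp (- measure lborel B))) \<and>
     (\<forall>(B :: nat \<Rightarrow> (real \<times> real) set) K. finite K \<longrightarrow> disjoint_family_on B K \<longrightarrow>
        (\<forall>k\<in>K. B k \<in> sets borel \<and> bounded (B k)) \<longrightarrow>
        prob_space.indep_vars M (\<lambda>_. count_space UNIV) (\<lambda>k. count_pts x (B k)) K)"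

definition indep_rv2 :: "'w measure \<Rightarrow> 'a measure \<Rightarrow> ('w \<Rightarrow> 'a) \<Rightarrow> 'b measure \<Rightarrow> ('w \<Rightarrow> 'b) \<Rightarrow> bool" where
  "indep_rv2 M S X T Y \<longleftrightarrow> X \<in> measurable M S \<and> Y \<in> measurable M T \<and>
     (\<forall>A\<in>sets S. \<forall>B\<in>sets T.
        measure M (X -` A \<inter> Y -` B \<inter> space M)
          = measure M (X -` A \<inter> space M) * measure M (Y -` B \<inter> space M))"

definition ell :: "real \<Rightarrow> real \<Rightarrow> real" where
  "ell \<beta> r = r powr \<beta>"

definition e_pt :: "real \<Rightarrow> real \<times> real" where
  "e_pt lam = (lam, 0)"

definition interference ::
  "real \<Rightarrow> (nat \<Rightarrow> 'w \<Rightarrow> real \<times> real) \<Rightarrow> (nat \<Rightarrow> 'w \<Rightarrow> real) \<Rightarrow> real \<times> real \<Rightarrow> 'w \<Rightarrow> ennreal" where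
  "interference \<beta> x Fm y \<omega> =
     (\<Sum>i. ennreal (Fm i \<omega>) / ennreal (ell \<beta> (norm (y - x i \<omega>))))"

text \<open>SIR_{0,lam} = (F_0 / l(||e_lam||)) / I(e_lam), with F lam 0 = F_{0 lam} and
  F lam (Suc i) the mark of point x i.\<close>
definition SIR ::
  "real \<Rightarrow> (nat \<Rightarrow> 'w \<Rightarrow> real \<times> real) \<Rightarrow> (real \<Rightarrow> nat \<Rightarrow> 'w \<Rightarrow> real) \<Rightarrow> real \<Rightarrow> 'w \<Rightarrow> ennreal" where
  "SIR \<beta> x F lam \<omega> =
     (ennreal (F lam 0 \<omega>) / ennreal (ell \<beta> (norm (e_pt lam))))
       / interference \<beta> x (\<lambda>i. F lam (Suc i)) (e_pt lam) \<omega>"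

end

theory Submission
  imports Defs
begin

text \<open>The threshold \<open>c / lam powr \<beta>\<close> cancels the path loss \<open>ell \<beta> (norm (e_pt lam)) = lam powr \<beta>\<close> of the
  useful signal, so the event says \<open>F\<^sub>0 \<ge> c * I(e_lam)\<close>, and it suffices to make its failure
  probability small uniformly in \<open>lam\<close> for all small \<open>c\<close>. Given \<open>\<epsilon>\<close>, choose \<open>\<delta>\<close> with
  \<open>P(F\<^sub>0 \<le> \<delta>) < \<epsilon>/3\<close> and \<open>r\<close> with \<open>pi r\<^sup>2 = \<epsilon>/3\<close>, which bounds the probability of a point of
  the Poisson process within distance \<open>r\<close> of \<open>e_lam\<close>. Off that disc, \<open>|y|\<^sup>-\<^sup>\<beta>\<close> is dominated by a
  step function constant on the dyadic annuli \<open>r 2\<^sup>k \<le> |y| < r 2\<^sup>k\<^sup>+\<^sup>1\<close>. Campbell's formula for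
  indicators bounds the mean shot noise of this majorant by \<open>E F\<close> times
  \<open>\<Sum>\<^sub>k (r 2\<^sup>k)\<^sup>-\<^sup>\<beta> pi (r 2\<^sup>k\<^sup>+\<^sup>1)\<^sup>2\<close>, a geometric series that converges because \<open>\<beta> > 2\<close>,
  and Markov's inequality makes the majorant exceed \<open>\<delta> / c\<close> with probability \<open>O(c)\<close>. Off these
  three events the interference is at most \<open>\<delta> / c < F\<^sub>0 / c\<close>.\<close>

lemma suminf_commute_ennreal:
  fixes f :: "nat \<Rightarrow> nat \<Rightarrow> ennreal"
  shows "(\<Sum>i. \<Sum>k. f i k) = (\<Sum>k. \<Sum>i. f i k)"
proof -
  have "(\<Sum>i. \<Sum>k. f i k) = (\<integral>\<^sup>+i. (\<Sum>k. f i k) \<partial>count_space UNIV)"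
    by (simp add: nn_integral_count_space_nat)
  also have "\<dots> = (\<Sum>k. \<integral>\<^sup>+i. f i k \<partial>count_space UNIV)"
    by (rule nn_integral_suminf) simp
  also have "\<dots> = (\<Sum>k. \<Sum>i. f i k)"
    by (simp add: nn_integral_count_space_nat)
  finally show ?thesis .
qed

lemma suminf_poisson_mean:
  fixes m :: real
  assumes "0 \<le> m"
  shows "(\<Sum>k. of_nat k * ennreal (m ^ k / fact k * exp (- m))) = ennreal m"
proof -
  have "(\<lambda>n. m ^ n / fact n) sums exp m"
    using exp_converges[of m] by (simp add: divide_inverse mult.commute)
  then have "(\<lambda>n. m * exp (- m) * (m ^ n / fact n)) sums (m * exp (- m) * exp m)"
    by (rule sums_mult)
  then have sums_m: "(\<lambda>n. m * exp (- m) * (m ^ n / fact n)) sums m"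
    by (simp add: exp_minus field_simps)
  have shift: "m * exp (- m) * (m ^ n / fact n) = real (Suc n) * (m ^ Suc n / fact (Suc n) * exp (- m))"
    for n
  proof -
    have "real (Suc n) / fact (Suc n) = 1 / fact n"
      by (simp only: fact_Suc) (simp add: field_simps del: of_nat_Suc)
    then show ?thesis
      by simp
  qed
  have "(\<lambda>n. real (Suc n) * (m ^ Suc n / fact (Suc n) * exp (- m))) sums m"
    using sums_m unfolding shift .
  then have "(\<lambda>k. real k * (m ^ k / fact k * exp (- m))) sums m"
    using sums_Suc_iff[where f = "\<lambda>k. real k * (m ^ k / fact k * exp (- m))"] by simp
  then have "(\<Sum>k. ennreal (real k * (m ^ k / fact k * exp (- m)))) = ennreal m"
    using assms by (simp add: suminf_ennreal2 sums_summable sums_unique[symmetric])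
  moreover have "of_nat k * ennreal (m ^ k / fact k * exp (- m)) = ennreal (real k * (m ^ k / fact k * exp (- m)))"
    for k
    by (subst ennreal_mult') (simp_all add: ennreal_of_nat_eq_real_of_nat)
  ultimately show ?thesis
    by simp
qed

lemma measure_lborel_ball_plane:
  fixes c :: "real \<times> real"
  assumes "0 \<le> r"
  shows "measure lborel (ball c r) = pi * r\<^sup>2"
  using content_ball[OF assms, of c] by (simp add: unit_ball_vol_2 power2_eq_square)

lemma dyadic_shell_index:
  fixes r d :: real
  assumes "0 < r" "r \<le> d"
  shows "\<exists>k. r * 2 ^ k \<le> d \<and> d < r * 2 ^ Suc k"
proof -
  define k where "k = nat \<lfloor>log 2 (d / r)\<rfloor>"
  have ge1: "1 \<le> d / r" using assms by simp
  have "2 ^ k \<le> d / r"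
    unfolding k_def using power_of_nat_log_le[of 2 "d / r"] ge1 by simp
  moreover have "log 2 (d / r) < real (Suc k)"
    unfolding k_def using ge1 by linarith
  then have "d / r < 2 powr real (Suc k)"
    using ge1 by (subst (asm) log_less_iff) auto
  then have "d / r < 2 ^ Suc k"
    by (simp only: powr_realpow)
  ultimately show ?thesis
    using assms by (intro exI[of _ k]) (simp add: field_simps)
qed

lemma ex_pos_measure_atMost_less:
  fixes D :: "real measure"
  assumes "real_distribution D" and pos: "AE p in D. 0 < p" and "0 < \<epsilon>"
  shows "\<exists>\<delta>>0. measure D {..\<delta>} < \<epsilon>"
proof -
  interpret real_distribution D by fact
  have "{p \<in> space D. \<not> 0 < p} = {..0}"
    by auto
  then have "emeasure D {..0} = 0"
    using AE_iff_measurable[of "{..0}" D "\<lambda>p. 0 < p"] pos by simp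
  then have "cdf D 0 = 0"
    by (simp add: cdf_def measure_def)
  then have "(cdf D \<longlongrightarrow> 0) (at_right 0)"
    using cdf_is_right_cont[of 0] by (simp add: continuous_within)
  then have "\<forall>\<^sub>F \<delta> in at_right 0. cdf D \<delta> < \<epsilon>"
    using \<open>0 < \<epsilon>\<close> by (rule order_tendstoD(2))
  then have "\<forall>\<^sub>F \<delta> in at_right 0. 0 < \<delta> \<and> cdf D \<delta> < \<epsilon>"
    using eventually_at_right_less by (rule eventually_conj[rotated])
  then obtain \<delta> where "0 < \<delta>" "cdf D \<delta> < \<epsilon>"
    using eventually_happens'[of "at_right (0::real)"] by auto
  then show ?thesis
    by (auto simp: cdf_def)
qed

lemma ennreal_le_div_div:
  fixes I :: ennreal and L c \<delta> F\<^sub>0 :: real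
  assumes "0 < L" "0 < c" "0 < \<delta>" "\<delta> < F\<^sub>0" and small: "ennreal (c / \<delta>) * I < 1"
  shows "ennreal (c / L) \<le> (ennreal F\<^sub>0 / ennreal L) / I"
proof (cases "I = 0")
  case True
  with assms show ?thesis by (simp add: divide_ennreal)
next
  case False
  have "I < top"
  proof (rule ccontr)
    assume "\<not> I < top"
    then have "I = top"
      by (simp add: less_top[symmetric])
    then have "ennreal (c / \<delta>) * I = top"
      using assms by (simp add: ennreal_mult_top)
    with small show False by simp
  qed
  have "ennreal (c / L) * I = ennreal (\<delta> / L) * (ennreal (c / \<delta>) * I)"
    using assms by (simp add: ennreal_mult[symmetric] mult.assoc[symmetric])
  also have "\<dots> \<le> ennreal (\<delta> / L)"
    using small by (intro mult_left_le) auto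
  also have "\<dots> \<le> ennreal (F\<^sub>0 / L)"
    using assms by (intro ennreal_leI divide_right_mono) auto
  also have "\<dots> = ennreal F\<^sub>0 / ennreal L"
    using assms by (simp add: divide_ennreal)
  finally show ?thesis
    using False \<open>I < top\<close>
    by (meson divide_less_ennreal linorder_not_le)
qed

lemma Liminf_at_right_Liminf_eq_1:
  fixes P :: "real \<Rightarrow> 'a \<Rightarrow> real" and F :: "'a filter"
  assumes "F \<noteq> bot" and le_1: "\<And>c l. P c l \<le> 1"
    and lower: "\<And>\<epsilon>. 0 < \<epsilon> \<Longrightarrow> \<exists>c\<^sub>0>0. \<forall>c. 0 < c \<and> c < c\<^sub>0 \<longrightarrow> (\<forall>\<^sub>F l in F. 1 - \<epsilon> \<le> P c l)"
  shows "Liminf (at_right 0) (\<lambda>c. Liminf F (\<lambda>l. ereal (P c l))) = 1"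
proof (rule antisym)
  show "Liminf (at_right 0) (\<lambda>c. Liminf F (\<lambda>l. ereal (P c l))) \<le> 1"
    using assms(1) le_1 by (intro Liminf_le always_eventually allI) auto
  show "1 \<le> Liminf (at_right 0) (\<lambda>c. Liminf F (\<lambda>l. ereal (P c l)))"
  proof (rule ereal_le_epsilon2)
    fix \<epsilon> :: real
    assume "0 < \<epsilon>"
    then obtain c\<^sub>0 where "0 < c\<^sub>0" and c\<^sub>0: "\<And>c. 0 < c \<Longrightarrow> c < c\<^sub>0 \<Longrightarrow> \<forall>\<^sub>F l in F. 1 - \<epsilon> \<le> P c l"
      using lower by blast
    have "\<forall>\<^sub>F c in at_right 0. ereal (1 - \<epsilon>) \<le> Liminf F (\<lambda>l. ereal (P c l))"
      using eventually_at_right_real[OF \<open>0 < c\<^sub>0\<close>]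
    proof eventually_elim
      case (elim c)
      then show ?case
        using c\<^sub>0[of c] by (intro Liminf_bounded) (auto elim: eventually_mono)
    qed
    then have "ereal (1 - \<epsilon>) \<le> Liminf (at_right 0) (\<lambda>c. Liminf F (\<lambda>l. ereal (P c l)))"
      by (rule Liminf_bounded)
    then show "1 \<le> Liminf (at_right 0) (\<lambda>c. Liminf F (\<lambda>l. ereal (P c l))) + ereal \<epsilon>"
      by (cases "Liminf (at_right 0) (\<lambda>c. Liminf F (\<lambda>l. ereal (P c l)))") auto
  qed
qed

definition dyadic_annulus :: "real \<Rightarrow> 'a::metric_space \<Rightarrow> nat \<Rightarrow> 'a set" where
  "dyadic_annulus r e k = ball e (r * 2 ^ Suc k) - ball e (r * 2 ^ k)"

definition dyadic_weight :: "real \<Rightarrow> real \<Rightarrow> nat \<Rightarrow> real" where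
  "dyadic_weight \<beta> r k = (r * 2 ^ k) powr (- \<beta>)"

definition dyadic_majorant :: "real \<Rightarrow> real \<Rightarrow> 'a::metric_space \<Rightarrow> 'a \<Rightarrow> ennreal" where
  "dyadic_majorant \<beta> r e z = (\<Sum>k. ennreal (dyadic_weight \<beta> r k) * indicator (dyadic_annulus r e k) z)"

text \<open>Weight times an upper bound for the area of the \<open>k\<close>-th annulus in the plane.\<close>

definition dyadic_mass :: "real \<Rightarrow> real \<Rightarrow> nat \<Rightarrow> real" where
  "dyadic_mass \<beta> r k = dyadic_weight \<beta> r k * (pi * (r * 2 ^ Suc k)\<^sup>2)"

definition dyadic_shot_noise ::
  "real \<Rightarrow> real \<Rightarrow> (nat \<Rightarrow> 'w \<Rightarrow> 'a::metric_space) \<Rightarrow> (nat \<Rightarrow> 'w \<Rightarrow> real) \<Rightarrow> 'a \<Rightarrow> 'w \<Rightarrow> ennreal" where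
  "dyadic_shot_noise \<beta> r x Fm e \<omega> = (\<Sum>i. ennreal (Fm i \<omega>) * dyadic_majorant \<beta> r e (x i \<omega>))"

lemma dyadic_annulus_borel [measurable]: "dyadic_annulus r e k \<in> sets borel"
  unfolding dyadic_annulus_def by auto

lemma bounded_dyadic_annulus: "bounded (dyadic_annulus r e k)"
  unfolding dyadic_annulus_def by (meson bounded_ball bounded_diff)

lemma measure_dyadic_annulus_le:
  fixes e :: "real \<times> real"
  assumes "0 < r"
  shows "measure lborel (dyadic_annulus r e k) \<le> pi * (r * 2 ^ Suc k)\<^sup>2"
proof -
  have "measure lborel (dyadic_annulus r e k) \<le> measure lborel (ball e (r * 2 ^ Suc k))"
    unfolding dyadic_annulus_def
    using emeasure_lborel_ball_finite[of e "r * 2 ^ Suc k"]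
    by (intro measure_mono_fmeasurable) (auto simp: fmeasurable_def)
  also have "\<dots> = pi * (r * 2 ^ Suc k)\<^sup>2"
    using assms by (intro measure_lborel_ball_plane) simp
  finally show ?thesis .
qed

lemma dyadic_mass_nonneg: "0 < r \<Longrightarrow> 0 \<le> dyadic_mass \<beta> r k"
  unfolding dyadic_mass_def dyadic_weight_def by simp

text \<open>The masses decay geometrically with ratio \<open>4 * 2 powr - \<beta>\<close>; this is where \<open>\<beta> > 2\<close> enters.\<close>

lemma summable_dyadic_mass:
  assumes "2 < \<beta>" "0 < r"
  shows "summable (dyadic_mass \<beta> r)"
proof (rule summable_ratio_test[where c = "4 * 2 powr (- \<beta>)" and N = 0])
  have "2 powr (- \<beta>) < 2 powr (- 2)"
    using assms by (intro powr_less_mono) auto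
  then show "4 * 2 powr (- \<beta>) < 1"
    by (simp add: powr_minus_divide)
  fix k :: nat
  have "dyadic_mass \<beta> r (Suc k) = (r * 2 ^ k * 2) powr (- \<beta>) * (pi * (r * 2 ^ Suc k)\<^sup>2 * 4)"
    unfolding dyadic_mass_def dyadic_weight_def by (simp add: power2_eq_square mult_ac)
  also have "\<dots> = (4 * 2 powr (- \<beta>)) * dyadic_mass \<beta> r k"
    unfolding dyadic_mass_def dyadic_weight_def using assms by (simp add: powr_mult mult_ac)
  finally show "norm (dyadic_mass \<beta> r (Suc k)) \<le> 4 * 2 powr (- \<beta>) * norm (dyadic_mass \<beta> r k)"
    using dyadic_mass_nonneg[OF \<open>0 < r\<close>] by simp
qed

lemma ennreal_div_ell_le_dyadic_majorant:
  fixes e z :: "'a::real_normed_vector"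
  assumes "0 < r" "0 \<le> \<beta>" "r \<le> dist e z"
  shows "ennreal v / ennreal (ell \<beta> (norm (e - z))) \<le> ennreal v * dyadic_majorant \<beta> r e z"
proof (cases "0 < v")
  case False
  then show ?thesis by (simp add: ennreal_neg)
next
  case True
  let ?d = "dist e z"
  obtain k where k: "r * 2 ^ k \<le> ?d" "?d < r * 2 ^ Suc k"
    using dyadic_shell_index assms by blast
  have "z \<in> dyadic_annulus r e k"
    unfolding dyadic_annulus_def using k by auto
  then have weight_le: "ennreal (dyadic_weight \<beta> r k) \<le> dyadic_majorant \<beta> r e z"
    unfolding dyadic_majorant_def
    using sum_le_suminf[of "\<lambda>k. ennreal (dyadic_weight \<beta> r k) * indicator (dyadic_annulus r e k) z" "{k}"]
    by simp
  have "0 < ?d"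
    using assms by linarith
  have "(r * 2 ^ k) powr \<beta> \<le> ?d powr \<beta>"
    using k(1) assms by (intro powr_mono2) auto
  then have "1 / ?d powr \<beta> \<le> dyadic_weight \<beta> r k"
    unfolding dyadic_weight_def powr_minus_divide using assms \<open>0 < ?d\<close>
    by (intro divide_left_mono) auto
  then have "ennreal (v / ?d powr \<beta>) \<le> ennreal (v * dyadic_weight \<beta> r k)"
    using True by (intro ennreal_leI) (simp add: divide_inverse mult_left_mono)
  also have "\<dots> \<le> ennreal v * dyadic_majorant \<beta> r e z"
    using True weight_le by (simp add: ennreal_mult' mult_left_mono)
  finally show ?thesis
    unfolding ell_def dist_norm[symmetric] using True \<open>0 < ?d\<close> by (simp add: divide_ennreal)
qed

lemma interference_le_dyadic_shot_noise:
  assumes "0 < r" "0 \<le> \<beta>" "\<And>i. r \<le> dist e (x i \<omega>)"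
  shows "interference \<beta> x Fm e \<omega> \<le> dyadic_shot_noise \<beta> r x Fm e \<omega>"
  unfolding interference_def dyadic_shot_noise_def
  by (intro suminf_le ennreal_div_ell_le_dyadic_majorant) (use assms in auto)

lemma SIR_ge_if_shot_noise_small:
  assumes "0 < lam" "0 < r" "0 \<le> \<beta>" "0 < c" "0 < \<delta>" "\<delta> < F lam 0 \<omega>"
    and far: "\<And>i. r \<le> dist (e_pt lam) (x i \<omega>)"
    and small: "ennreal (c / \<delta>) * dyadic_shot_noise \<beta> r x (\<lambda>i. F lam (Suc i)) (e_pt lam) \<omega> < 1"
  shows "ennreal (c / lam powr \<beta>) \<le> SIR \<beta> x F lam \<omega>"
proof -
  have "ennreal (c / \<delta>) * interference \<beta> x (\<lambda>i. F lam (Suc i)) (e_pt lam) \<omega> < 1"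
    using interference_le_dyadic_shot_noise[of r \<beta> "e_pt lam" x \<omega>] assms small
    by (meson le_less_trans mult_left_mono zero_le)
  moreover have "norm (e_pt lam) = lam"
    using assms by (simp add: e_pt_def)
  ultimately show ?thesis
    unfolding SIR_def ell_def using assms by (simp add: ennreal_le_div_div)
qed

locale marked_poisson_pp =
  fixes M :: "'w measure"
    and x :: "nat \<Rightarrow> 'w \<Rightarrow> real \<times> real"
    and F :: "real \<Rightarrow> nat \<Rightarrow> 'w \<Rightarrow> real"
    and Fd :: "real measure"
  assumes ppp: "poisson_pp M x"
    and Fd_prob: "prob_space Fd" and Fd_sets: "sets Fd = sets borel"
    and Fd_pos: "AE p in Fd. p > 0"
    and Fd_mean: "(\<integral>\<^sup>+ p. ennreal p \<partial>Fd) < \<infinity>"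
    and F_rv: "\<And>lam i. lam > 0 \<Longrightarrow> F lam i \<in> borel_measurable M"
    and F_distr: "\<And>lam i. lam > 0 \<Longrightarrow> distr M borel (F lam i) = Fd"
    and F_indep_Phi: "\<And>lam. lam > 0 \<Longrightarrow>
          indep_rv2 M
            (Pi\<^sub>M UNIV (\<lambda>_. borel)) (\<lambda>\<omega> i. x i \<omega>)
            (Pi\<^sub>M UNIV (\<lambda>_. borel)) (\<lambda>\<omega> i. F lam i \<omega>)"
begin

sublocale prob_space M
  using ppp unfolding poisson_pp_def by (elim conjE) blast

lemma points_measurable [measurable]: "x i \<in> borel_measurable M"
  using ppp unfolding poisson_pp_def by (elim conjE) blast

lemma inj_points: "\<omega> \<in> space M \<Longrightarrow> inj (\<lambda>i. x i \<omega>)"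
  using ppp unfolding poisson_pp_def by (elim conjE) blast

lemma finite_points_bounded: "\<omega> \<in> space M \<Longrightarrow> bounded B \<Longrightarrow> finite (pts x \<omega> \<inter> B)"
  using ppp unfolding poisson_pp_def by (elim conjE) blast

lemma count_pts_measurable:
  "B \<in> sets borel \<Longrightarrow> bounded B \<Longrightarrow> count_pts x B \<in> measurable M (count_space UNIV)"
  using ppp unfolding poisson_pp_def by (elim conjE) blast

lemma prob_count_pts_eq:
  "B \<in> sets borel \<Longrightarrow> bounded B \<Longrightarrow>
   measure M {\<omega> \<in> space M. count_pts x B \<omega> = k} = measure lborel B ^ k / fact k * exp (- measure lborel B)"
  using ppp unfolding poisson_pp_def by (elim conjE) blast

lemma nn_integral_count_pts:
  assumes "B \<in> sets borel" "bounded B"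
  shows "(\<integral>\<^sup>+\<omega>. of_nat (count_pts x B \<omega>) \<partial>M) = ennreal (measure lborel B)"
proof -
  let ?N = "count_pts x B" and ?m = "measure lborel B"
  have [measurable]: "?N \<in> measurable M (count_space UNIV)"
    using count_pts_measurable assms by blast
  have "of_nat (?N \<omega>) = (\<Sum>k. of_nat k * indicator {\<omega> \<in> space M. ?N \<omega> = k} \<omega> :: ennreal)"
    if "\<omega> \<in> space M" for \<omega>
    using that by (subst suminf_finite[of "{?N \<omega>}"]) (auto simp: indicator_def)
  then have "(\<integral>\<^sup>+\<omega>. of_nat (?N \<omega>) \<partial>M)
      = (\<integral>\<^sup>+\<omega>. (\<Sum>k. of_nat k * indicator {\<omega> \<in> space M. ?N \<omega> = k} \<omega>) \<partial>M)"
    by (intro nn_integral_cong) simp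
  also have "\<dots> = (\<Sum>k. of_nat k * emeasure M {\<omega> \<in> space M. ?N \<omega> = k})"
    by (subst nn_integral_suminf) (auto simp: nn_integral_cmult_indicator)
  also have "\<dots> = (\<Sum>k. of_nat k * ennreal (?m ^ k / fact k * exp (- ?m)))"
    by (simp add: emeasure_eq_measure prob_count_pts_eq[OF assms])
  also have "\<dots> = ennreal ?m"
    by (rule suminf_poisson_mean) simp
  finally show ?thesis .
qed

lemma suminf_indicator_points:
  assumes "\<omega> \<in> space M" "bounded S"
  shows "(\<Sum>i. indicator S (x i \<omega>) :: ennreal) = of_nat (count_pts x S \<omega>)"
proof -
  let ?I = "{i. x i \<omega> \<in> S}"
  have inj: "inj_on (\<lambda>i. x i \<omega>) ?I"
    using inj_points[OF assms(1)] by (simp add: inj_on_def inj_def)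
  have image: "(\<lambda>i. x i \<omega>) ` ?I = pts x \<omega> \<inter> S"
    by (auto simp: pts_def)
  then have "finite ?I"
    using finite_points_bounded[OF assms] finite_imageD[OF _ inj] by simp
  then have "(\<Sum>i. indicator S (x i \<omega>) :: ennreal) = of_nat (card ?I)"
    by (subst suminf_finite[of ?I]) (auto simp: indicator_def)
  also have "card ?I = count_pts x S \<omega>"
    unfolding count_pts_def image[symmetric] by (rule card_image[OF inj, symmetric])
  finally show ?thesis .
qed

lemma suminf_prob_point_in:
  assumes [measurable]: "S \<in> sets borel" and "bounded S"
  shows "(\<Sum>i. emeasure M {\<omega> \<in> space M. x i \<omega> \<in> S}) = ennreal (measure lborel S)"
proof -
  have "(\<Sum>i. emeasure M {\<omega> \<in> space M. x i \<omega> \<in> S}) = (\<Sum>i. \<integral>\<^sup>+\<omega>. indicator S (x i \<omega>) \<partial>M)"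
  proof (intro suminf_cong)
    fix i
    have "{\<omega> \<in> space M. x i \<omega> \<in> S} \<in> sets M"
      by measurable
    then have "emeasure M {\<omega> \<in> space M. x i \<omega> \<in> S} = (\<integral>\<^sup>+\<omega>. indicator {\<omega> \<in> space M. x i \<omega> \<in> S} \<omega> \<partial>M)"
      by simp
    also have "\<dots> = (\<integral>\<^sup>+\<omega>. indicator S (x i \<omega>) \<partial>M)"
      by (intro nn_integral_cong) (auto simp: indicator_def)
    finally show "emeasure M {\<omega> \<in> space M. x i \<omega> \<in> S} = (\<integral>\<^sup>+\<omega>. indicator S (x i \<omega>) \<partial>M)" .
  qed
  also have "\<dots> = (\<integral>\<^sup>+\<omega>. (\<Sum>i. indicator S (x i \<omega>)) \<partial>M)"
    by (rule nn_integral_suminf[symmetric]) measurable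
  also have "\<dots> = (\<integral>\<^sup>+\<omega>. of_nat (count_pts x S \<omega>) \<partial>M)"
    by (intro nn_integral_cong) (simp add: suminf_indicator_points assms)
  also have "\<dots> = ennreal (measure lborel S)"
    by (rule nn_integral_count_pts) (use assms in auto)
  finally show ?thesis .
qed

lemma prob_points_in_ball_le:
  fixes e :: "real \<times> real"
  assumes "0 \<le> r"
  shows "measure M {\<omega> \<in> space M. count_pts x (ball e r) \<omega> \<noteq> 0} \<le> pi * r\<^sup>2"
proof -
  have [measurable]: "count_pts x (ball e r) \<in> measurable M (count_space UNIV)"
    by (rule count_pts_measurable) auto
  have "measure M {\<omega> \<in> space M. count_pts x (ball e r) \<omega> \<noteq> 0}
      = 1 - measure M {\<omega> \<in> space M. count_pts x (ball e r) \<omega> = 0}"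
    by (subst prob_compl[symmetric]) (auto intro!: arg_cong[where f = "measure M"])
  also have "\<dots> = 1 - exp (- (pi * r\<^sup>2))"
    using prob_count_pts_eq[of "ball e r" 0] measure_lborel_ball_plane[OF assms] by simp
  also have "\<dots> \<le> pi * r\<^sup>2"
    using exp_ge_add_one_self[of "- (pi * r\<^sup>2)"] by simp
  finally show ?thesis .
qed

lemma far_from_points_if_count_zero:
  assumes "\<omega> \<in> space M" "count_pts x (ball e r) \<omega> = 0"
  shows "r \<le> dist e (x i \<omega>)"
proof -
  have "pts x \<omega> \<inter> ball e r = {}"
    using assms finite_points_bounded[OF assms(1), of "ball e r"] by (simp add: count_pts_def)
  moreover have "x i \<omega> \<in> pts x \<omega>"
    by (simp add: pts_def)
  ultimately show ?thesis
    by (auto simp: not_less[symmetric])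
qed

lemma emeasure_point_mark_indep:
  assumes "0 < lam" "S \<in> sets borel" "A \<in> sets borel"
  shows "emeasure M {\<omega> \<in> space M. x i \<omega> \<in> S \<and> F lam j \<omega> \<in> A}
    = emeasure M {\<omega> \<in> space M. x i \<omega> \<in> S} * emeasure M {\<omega> \<in> space M. F lam j \<omega> \<in> A}"
proof -
  let ?X = "\<lambda>\<omega> i. x i \<omega>" and ?Fs = "\<lambda>\<omega> i. F lam i \<omega>"
  define S' where "S' = (\<lambda>z. z i) -` S \<inter> space (Pi\<^sub>M UNIV (\<lambda>_. borel :: (real \<times> real) measure))"
  define A' where "A' = (\<lambda>z. z j) -` A \<inter> space (Pi\<^sub>M UNIV (\<lambda>_. borel :: real measure))"
  have "S' \<in> sets (Pi\<^sub>M UNIV (\<lambda>_. borel))" "A' \<in> sets (Pi\<^sub>M UNIV (\<lambda>_. borel))"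
    unfolding S'_def A'_def using assms
    by (auto intro!: measurable_sets[OF measurable_component_singleton])
  then have "measure M (?X -` S' \<inter> ?Fs -` A' \<inter> space M)
      = measure M (?X -` S' \<inter> space M) * measure M (?Fs -` A' \<inter> space M)"
    using F_indep_Phi[OF assms(1)] unfolding indep_rv2_def by blast
  moreover have "?X -` S' \<inter> ?Fs -` A' \<inter> space M = {\<omega> \<in> space M. x i \<omega> \<in> S \<and> F lam j \<omega> \<in> A}"
    "?X -` S' \<inter> space M = {\<omega> \<in> space M. x i \<omega> \<in> S}"
    "?Fs -` A' \<inter> space M = {\<omega> \<in> space M. F lam j \<omega> \<in> A}"
    unfolding S'_def A'_def by (auto simp: space_PiM)
  ultimately show ?thesis
    by (simp add: emeasure_eq_measure ennreal_mult)
qed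

lemma distr_mark_density_point_event:
  assumes "0 < lam" and [measurable]: "S \<in> sets borel"
  shows "distr (density M (indicator {\<omega> \<in> space M. x i \<omega> \<in> S})) borel (F lam j)
    = scale_measure (emeasure M {\<omega> \<in> space M. x i \<omega> \<in> S}) Fd"
    (is "distr ?D borel _ = _")
proof (rule measure_eqI)
  have [measurable]: "F lam j \<in> borel_measurable M"
    using F_rv assms by blast
  then have F_meas_D: "F lam j \<in> borel_measurable ?D"
    by (simp add: measurable_cong_sets[OF sets_density refl])
  show "sets (distr ?D borel (F lam j)) = sets (scale_measure (emeasure M {\<omega> \<in> space M. x i \<omega> \<in> S}) Fd)"
    using Fd_sets by simp
  fix A
  assume "A \<in> sets (distr ?D borel (F lam j))"
  then have [measurable]: "A \<in> sets borel"
    by simp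
  have "emeasure (distr ?D borel (F lam j)) A = emeasure ?D (F lam j -` A \<inter> space M)"
    using emeasure_distr[OF F_meas_D] by simp
  also have "\<dots> = emeasure M {\<omega> \<in> space M. x i \<omega> \<in> S \<and> F lam j \<omega> \<in> A}"
    by (subst emeasure_density) (auto intro!: nn_integral_cong simp: indicator_def
        simp flip: nn_integral_indicator)
  also have "\<dots> = emeasure M {\<omega> \<in> space M. x i \<omega> \<in> S} * emeasure (distr M borel (F lam j)) A"
    using emeasure_point_mark_indep[OF assms(1,2)] by (simp add: emeasure_distr vimage_def Int_def conj_commute)
  finally show "emeasure (distr ?D borel (F lam j)) A
      = emeasure (scale_measure (emeasure M {\<omega> \<in> space M. x i \<omega> \<in> S}) Fd) A"
    using F_distr[OF assms(1)] by simp
qed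

lemma nn_integral_mark_point_event:
  assumes "0 < lam" and [measurable]: "S \<in> sets borel"
  shows "(\<integral>\<^sup>+\<omega>. ennreal (F lam j \<omega>) * indicator {\<omega> \<in> space M. x i \<omega> \<in> S} \<omega> \<partial>M)
    = emeasure M {\<omega> \<in> space M. x i \<omega> \<in> S} * (\<integral>\<^sup>+p. ennreal p \<partial>Fd)"
proof -
  let ?E = "{\<omega> \<in> space M. x i \<omega> \<in> S}"
  have [measurable]: "F lam j \<in> borel_measurable M" "?E \<in> sets M"
    using F_rv assms by auto
  have "(\<integral>\<^sup>+\<omega>. ennreal (F lam j \<omega>) * indicator ?E \<omega> \<partial>M) = (\<integral>\<^sup>+\<omega>. ennreal (F lam j \<omega>) \<partial>density M (indicator ?E))"
    by (subst nn_integral_density) (auto simp: mult.commute)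
  also have "\<dots> = (\<integral>\<^sup>+p. ennreal p \<partial>distr (density M (indicator ?E)) borel (F lam j))"
    by (subst nn_integral_distr) (auto simp: measurable_cong_sets[OF sets_density refl])
  also have "\<dots> = emeasure M ?E * (\<integral>\<^sup>+p. ennreal p \<partial>Fd)"
    unfolding distr_mark_density_point_event[OF assms]
    by (rule nn_integral_scale_measure) (simp add: measurable_cong_sets[OF Fd_sets refl])
  finally show ?thesis .
qed

lemma nn_integral_marked_count:
  assumes "0 < lam" and [measurable]: "S \<in> sets borel" and "bounded S"
  shows "(\<integral>\<^sup>+\<omega>. (\<Sum>i. ennreal (F lam (Suc i) \<omega>) * indicator S (x i \<omega>)) \<partial>M)
    = ennreal (measure lborel S) * (\<integral>\<^sup>+p. ennreal p \<partial>Fd)"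
proof -
  have [measurable]: "F lam j \<in> borel_measurable M" for j
    using F_rv assms by blast
  have "(\<integral>\<^sup>+\<omega>. (\<Sum>i. ennreal (F lam (Suc i) \<omega>) * indicator S (x i \<omega>)) \<partial>M)
      = (\<Sum>i. \<integral>\<^sup>+\<omega>. ennreal (F lam (Suc i) \<omega>) * indicator {\<omega> \<in> space M. x i \<omega> \<in> S} \<omega> \<partial>M)"
    by (subst nn_integral_suminf) (auto intro!: suminf_cong nn_integral_cong simp: indicator_def)
  also have "\<dots> = (\<Sum>i. emeasure M {\<omega> \<in> space M. x i \<omega> \<in> S}) * (\<integral>\<^sup>+p. ennreal p \<partial>Fd)"
    by (simp add: nn_integral_mark_point_event[OF assms(1,2)])
  also have "\<dots> = ennreal (measure lborel S) * (\<integral>\<^sup>+p. ennreal p \<partial>Fd)"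
    by (simp add: suminf_prob_point_in assms)
  finally show ?thesis .
qed

lemma dyadic_shot_noise_measurable:
  "0 < lam \<Longrightarrow> dyadic_shot_noise \<beta> r x (\<lambda>i. F lam (Suc i)) e \<in> borel_measurable M"
  using F_rv unfolding dyadic_shot_noise_def dyadic_majorant_def by measurable

lemma nn_integral_dyadic_shot_noise_le:
  assumes "2 < \<beta>" "0 < lam" "0 < r"
  shows "(\<integral>\<^sup>+\<omega>. dyadic_shot_noise \<beta> r x (\<lambda>i. F lam (Suc i)) e \<omega> \<partial>M)
    \<le> ennreal (\<Sum>k. dyadic_mass \<beta> r k) * (\<integral>\<^sup>+p. ennreal p \<partial>Fd)"
proof -
  let ?EF = "\<integral>\<^sup>+p. ennreal p \<partial>Fd" and ?w = "dyadic_weight \<beta> r" and ?A = "dyadic_annulus r e"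
  let ?N = "\<lambda>k \<omega>. \<Sum>i. ennreal (F lam (Suc i) \<omega>) * indicator (?A k) (x i \<omega>)"
  have [measurable]: "F lam j \<in> borel_measurable M" for j
    using F_rv assms by blast
  have "dyadic_shot_noise \<beta> r x (\<lambda>i. F lam (Suc i)) e \<omega> = (\<Sum>k. ennreal (?w k) * ?N k \<omega>)" for \<omega>
    unfolding dyadic_shot_noise_def dyadic_majorant_def
    by (simp only: ennreal_suminf_cmult[symmetric] mult.left_commute suminf_commute_ennreal[of
          "\<lambda>i k. ennreal (?w k) * (ennreal (F lam (Suc i) \<omega>) * indicator (?A k) (x i \<omega>))"])
  then have "(\<integral>\<^sup>+\<omega>. dyadic_shot_noise \<beta> r x (\<lambda>i. F lam (Suc i)) e \<omega> \<partial>M)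
      = (\<Sum>k. \<integral>\<^sup>+\<omega>. ennreal (?w k) * ?N k \<omega> \<partial>M)"
    by (simp add: nn_integral_suminf)
  also have "\<dots> = (\<Sum>k. ennreal (?w k) * (ennreal (measure lborel (?A k)) * ?EF))"
    using assms by (simp add: nn_integral_cmult nn_integral_marked_count bounded_dyadic_annulus)
  also have "\<dots> \<le> (\<Sum>k. ennreal (dyadic_mass \<beta> r k) * ?EF)"
  proof (intro suminf_le allI)
    fix k
    have "?w k * measure lborel (?A k) \<le> dyadic_mass \<beta> r k"
      unfolding dyadic_mass_def using measure_dyadic_annulus_le[OF assms(3)]
      by (intro mult_left_mono) (auto simp: dyadic_weight_def)
    then have "ennreal (?w k) * ennreal (measure lborel (?A k)) \<le> ennreal (dyadic_mass \<beta> r k)"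
      by (simp add: ennreal_mult[symmetric] dyadic_weight_def ennreal_leI)
    then show "ennreal (?w k) * (ennreal (measure lborel (?A k)) * ?EF) \<le> ennreal (dyadic_mass \<beta> r k) * ?EF"
      by (simp add: mult.assoc[symmetric] mult_right_mono)
  qed auto
  also have "\<dots> = ennreal (\<Sum>k. dyadic_mass \<beta> r k) * ?EF"
    using assms by (simp add: suminf_ennreal2 dyadic_mass_nonneg summable_dyadic_mass)
  finally show ?thesis .
qed

lemma ex_prob_mark_le_less:
  assumes "0 < \<epsilon>"
  shows "\<exists>\<delta>>0. \<forall>lam>0. measure M {\<omega> \<in> space M. F lam 0 \<omega> \<le> \<delta>} < \<epsilon>"
proof -
  have "real_distribution Fd"
    using Fd_prob Fd_sets by (simp add: real_distribution_def real_distribution_axioms_def)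
  then obtain \<delta> where "0 < \<delta>" "measure Fd {..\<delta>} < \<epsilon>"
    using ex_pos_measure_atMost_less Fd_pos assms by blast
  moreover have "measure M {\<omega> \<in> space M. F lam 0 \<omega> \<le> \<delta>} = measure Fd {..\<delta>}" if "0 < lam" for lam
  proof -
    have "measure M {\<omega> \<in> space M. F lam 0 \<omega> \<le> \<delta>} = measure (distr M borel (F lam 0)) {..\<delta>}"
      using F_rv[OF that] by (subst measure_distr) (auto simp: vimage_def Int_def conj_commute)
    then show ?thesis
      using F_distr[OF that] by simp
  qed
  ultimately show ?thesis
    by auto
qed

lemma prob_dyadic_shot_noise_large_le:
  assumes "2 < \<beta>" "0 < lam" "0 < r" "0 \<le> s"
  shows "measure M {\<omega> \<in> space M. 1 \<le> ennreal s * dyadic_shot_noise \<beta> r x (\<lambda>i. F lam (Suc i)) e \<omega>}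
    \<le> s * (\<Sum>k. dyadic_mass \<beta> r k) * enn2real (\<integral>\<^sup>+p. ennreal p \<partial>Fd)"
proof -
  let ?J = "dyadic_shot_noise \<beta> r x (\<lambda>i. F lam (Suc i)) e"
  have [measurable]: "?J \<in> borel_measurable M"
    using dyadic_shot_noise_measurable assms by blast
  have "emeasure M {\<omega> \<in> space M. 1 \<le> ennreal s * ?J \<omega>} \<le> ennreal s * (\<integral>\<^sup>+\<omega>. ?J \<omega> * indicator (space M) \<omega> \<partial>M)"
    using assms by (intro nn_integral_Markov_inequality) measurable
  also have "\<dots> = ennreal s * (\<integral>\<^sup>+\<omega>. ?J \<omega> \<partial>M)"
    by (intro arg_cong[where f = "(*) (ennreal s)"] nn_integral_cong) simp
  also have "\<dots> \<le> ennreal s * (ennreal (\<Sum>k. dyadic_mass \<beta> r k) * ennreal (enn2real (\<integral>\<^sup>+p. ennreal p \<partial>Fd)))"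
    using nn_integral_dyadic_shot_noise_le[OF assms(1-3)] Fd_mean
    by (intro mult_left_mono) (auto simp: less_top[symmetric])
  also have "\<dots> = ennreal (s * (\<Sum>k. dyadic_mass \<beta> r k) * enn2real (\<integral>\<^sup>+p. ennreal p \<partial>Fd))"
    using assms by (simp add: ennreal_mult suminf_nonneg summable_dyadic_mass dyadic_mass_nonneg mult.assoc)
  finally show ?thesis
    using assms by (simp add: emeasure_eq_measure suminf_nonneg summable_dyadic_mass dyadic_mass_nonneg)
qed

lemma prob_SIR_ge_lower_bound:
  assumes "2 < \<beta>" "0 < lam" "0 < r" "0 < c" "0 < \<delta>"
  shows "1 - measure M {\<omega> \<in> space M. F lam 0 \<omega> \<le> \<delta>} - pi * r\<^sup>2
      - c / \<delta> * (\<Sum>k. dyadic_mass \<beta> r k) * enn2real (\<integral>\<^sup>+p. ennreal p \<partial>Fd)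
    \<le> measure M {\<omega> \<in> space M. ennreal (c / lam powr \<beta>) \<le> SIR \<beta> x F lam \<omega>}"
proof -
  let ?J = "dyadic_shot_noise \<beta> r x (\<lambda>i. F lam (Suc i)) (e_pt lam)"
  define T where "T = {\<omega> \<in> space M. ennreal (c / lam powr \<beta>) \<le> SIR \<beta> x F lam \<omega>}"
  define B\<^sub>1 where "B\<^sub>1 = {\<omega> \<in> space M. F lam 0 \<omega> \<le> \<delta>}"
  define B\<^sub>2 where "B\<^sub>2 = {\<omega> \<in> space M. count_pts x (ball (e_pt lam) r) \<omega> \<noteq> 0}"
  define B\<^sub>3 where "B\<^sub>3 = {\<omega> \<in> space M. 1 \<le> ennreal (c / \<delta>) * ?J \<omega>}"
  have [measurable]: "F lam j \<in> borel_measurable M" for j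
    using F_rv assms by blast
  have "T \<in> sets M"
    unfolding T_def SIR_def interference_def ell_def by measurable
  have [measurable]: "count_pts x (ball (e_pt lam) r) \<in> measurable M (count_space UNIV)"
    by (rule count_pts_measurable) auto
  have [measurable]: "?J \<in> borel_measurable M"
    using dyadic_shot_noise_measurable assms by blast
  have "B\<^sub>1 \<in> sets M" "B\<^sub>2 \<in> sets M" "B\<^sub>3 \<in> sets M"
    unfolding B\<^sub>1_def B\<^sub>2_def B\<^sub>3_def by measurable
  note sets = \<open>T \<in> sets M\<close> this
  have "space M - T \<subseteq> B\<^sub>1 \<union> B\<^sub>2 \<union> B\<^sub>3"
  proof
    fix \<omega>
    assume \<omega>: "\<omega> \<in> space M - T"
    show "\<omega> \<in> B\<^sub>1 \<union> B\<^sub>2 \<union> B\<^sub>3"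
    proof (rule ccontr)
      assume "\<omega> \<notin> B\<^sub>1 \<union> B\<^sub>2 \<union> B\<^sub>3"
      then have "ennreal (c / lam powr \<beta>) \<le> SIR \<beta> x F lam \<omega>"
        using \<omega> assms far_from_points_if_count_zero[of \<omega> "e_pt lam" r]
        unfolding B\<^sub>1_def B\<^sub>2_def B\<^sub>3_def by (intro SIR_ge_if_shot_noise_small[of lam r \<beta> c \<delta>]) auto
      with \<omega> show False
        unfolding T_def by simp
    qed
  qed
  then have "measure M (space M - T) \<le> measure M (B\<^sub>1 \<union> B\<^sub>2 \<union> B\<^sub>3)"
    using sets by (intro finite_measure_mono) auto
  also have "\<dots> \<le> measure M (B\<^sub>1 \<union> B\<^sub>2) + measure M B\<^sub>3"
    using sets by (intro measure_Un_le) auto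
  also have "\<dots> \<le> measure M B\<^sub>1 + measure M B\<^sub>2 + measure M B\<^sub>3"
    using measure_Un_le[OF sets(2,3)] by simp
  moreover have "measure M B\<^sub>2 \<le> pi * r\<^sup>2"
    unfolding B\<^sub>2_def using assms by (intro prob_points_in_ball_le) simp
  moreover have "measure M B\<^sub>3 \<le> c / \<delta> * (\<Sum>k. dyadic_mass \<beta> r k) * enn2real (\<integral>\<^sup>+p. ennreal p \<partial>Fd)"
    unfolding B\<^sub>3_def using assms by (intro prob_dyadic_shot_noise_large_le) auto
  ultimately show ?thesis
    using prob_compl[OF sets(1)] unfolding T_def B\<^sub>1_def by linarith
qed

lemma prob_SIR_ge_uniform:
  assumes "2 < \<beta>" "0 < \<epsilon>"
  shows "\<exists>c\<^sub>0>0. \<forall>c. 0 < c \<and> c < c\<^sub>0 \<longrightarrow>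
    (\<forall>lam>0. 1 - \<epsilon> \<le> measure M {\<omega> \<in> space M. ennreal (c / lam powr \<beta>) \<le> SIR \<beta> x F lam \<omega>})"
proof -
  obtain \<delta> where "0 < \<delta>"
    and small_mark: "\<And>lam. 0 < lam \<Longrightarrow> measure M {\<omega> \<in> space M. F lam 0 \<omega> \<le> \<delta>} < \<epsilon> / 3"
    using ex_prob_mark_le_less[of "\<epsilon> / 3"] assms by auto
  define r where "r = sqrt (\<epsilon> / (3 * pi))"
  have "0 < r" "pi * r\<^sup>2 = \<epsilon> / 3"
    unfolding r_def using assms by auto
  define K where "K = (\<Sum>k. dyadic_mass \<beta> r k) * enn2real (\<integral>\<^sup>+p. ennreal p \<partial>Fd)"
  have "0 \<le> K"
    unfolding K_def using assms \<open>0 < r\<close>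
    by (simp add: suminf_nonneg summable_dyadic_mass dyadic_mass_nonneg)
  define c\<^sub>0 where "c\<^sub>0 = \<delta> * \<epsilon> / (3 * (K + 1))"
  have c_small: "c / \<delta> * K \<le> \<epsilon> / 3" if "0 < c" "c < c\<^sub>0" for c
  proof -
    have "c * K \<le> c\<^sub>0 * (K + 1)"
      using that \<open>0 \<le> K\<close> by (intro mult_mono) auto
    also have "\<dots> = \<delta> * (\<epsilon> / 3)"
      unfolding c\<^sub>0_def using \<open>0 \<le> K\<close> by (simp add: field_simps)
    finally show ?thesis
      using \<open>0 < \<delta>\<close> by (simp add: field_simps)
  qed
  have "1 - \<epsilon> \<le> measure M {\<omega> \<in> space M. ennreal (c / lam powr \<beta>) \<le> SIR \<beta> x F lam \<omega>}"
    if "0 < c" "c < c\<^sub>0" "0 < lam" for c lam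
  proof -
    have "1 - \<epsilon> \<le> 1 - measure M {\<omega> \<in> space M. F lam 0 \<omega> \<le> \<delta>} - pi * r\<^sup>2 - c / \<delta> * K"
      using small_mark[OF that(3)] \<open>pi * r\<^sup>2 = \<epsilon> / 3\<close> c_small[OF that(1,2)] by linarith
    also have "\<dots> \<le> measure M {\<omega> \<in> space M. ennreal (c / lam powr \<beta>) \<le> SIR \<beta> x F lam \<omega>}"
      using prob_SIR_ge_lower_bound[OF assms(1) that(3) \<open>0 < r\<close> that(1) \<open>0 < \<delta>\<close>]
      unfolding K_def mult.assoc .
    finally show ?thesis .
  qed
  moreover have "0 < c\<^sub>0"
    unfolding c\<^sub>0_def using \<open>0 < \<delta>\<close> \<open>0 \<le> K\<close> assms by simp
  ultimately show ?thesis
    by blast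
qed

end

theorem theorem3:
  fixes M :: "'w measure"
    and x :: "nat \<Rightarrow> 'w \<Rightarrow> real \<times> real"
    and F :: "real \<Rightarrow> nat \<Rightarrow> 'w \<Rightarrow> real"
    and Fd :: "real measure"
    and \<beta> :: real
  assumes beta: "\<beta> > 2"
    and ppp: "poisson_pp M x"
    and Fd_prob: "prob_space Fd" and Fd_sets: "sets Fd = sets borel"
    and Fd_pos: "AE p in Fd. p > 0"
    and Fd_mean: "(\<integral>\<^sup>+ p. ennreal p \<partial>Fd) < \<infinity>"
    and F_rv: "\<And>lam i. lam > 0 \<Longrightarrow> F lam i \<in> borel_measurable M"
    and F_distr: "\<And>lam i. lam > 0 \<Longrightarrow> distr M borel (F lam i) = Fd"
    and F_indep: "\<And>lam. lam > 0 \<Longrightarrow> prob_space.indep_vars M (\<lambda>_. borel) (F lam) UNIV"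
    and F_indep_Phi: "\<And>lam. lam > 0 \<Longrightarrow>
          indep_rv2 M
            (Pi\<^sub>M UNIV (\<lambda>_. borel)) (\<lambda>\<omega> i. x i \<omega>)
            (Pi\<^sub>M UNIV (\<lambda>_. borel)) (\<lambda>\<omega> i. F lam i \<omega>)"
  shows "Liminf (at_right 0) (\<lambda>c. Liminf at_top (\<lambda>lam.
           ereal (measure M {\<omega> \<in> space M.
              SIR \<beta> x F lam \<omega> \<ge> ennreal (c / lam powr \<beta>)}))) = 1"
proof -
  interpret marked_poisson_pp M x F Fd
    using ppp Fd_prob Fd_sets Fd_pos Fd_mean F_rv F_distr F_indep_Phi by (rule marked_poisson_pp.intro)
  show ?thesis
  proof (rule Liminf_at_right_Liminf_eq_1)
    fix \<epsilon> :: real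
    assume "0 < \<epsilon>"
    then obtain c\<^sub>0 where "0 < c\<^sub>0" and bound: "\<forall>c. 0 < c \<and> c < c\<^sub>0 \<longrightarrow>
        (\<forall>lam>0. 1 - \<epsilon> \<le> measure M {\<omega> \<in> space M. ennreal (c / lam powr \<beta>) \<le> SIR \<beta> x F lam \<omega>})"
      using prob_SIR_ge_uniform[OF beta \<open>0 < \<epsilon>\<close>] by blast
    show "\<exists>c\<^sub>0>0. \<forall>c. 0 < c \<and> c < c\<^sub>0 \<longrightarrow> (\<forall>\<^sub>F lam in at_top.
        1 - \<epsilon> \<le> measure M {\<omega> \<in> space M. ennreal (c / lam powr \<beta>) \<le> SIR \<beta> x F lam \<omega>})"
    proof (intro exI[of _ c\<^sub>0] conjI allI impI)
      fix c :: real
      assume "0 < c \<and> c < c\<^sub>0"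
      then have "1 - \<epsilon> \<le> measure M {\<omega> \<in> space M. ennreal (c / lam powr \<beta>) \<le> SIR \<beta> x F lam \<omega>}"
        if "0 < lam" for lam
        using bound that by blast
      then show "\<forall>\<^sub>F lam in at_top.
          1 - \<epsilon> \<le> measure M {\<omega> \<in> space M. ennreal (c / lam powr \<beta>) \<le> SIR \<beta> x F lam \<omega>}"
        by (rule eventually_mono[OF eventually_gt_at_top[of 0]])
    qed fact
  qed (simp_all add: prob_le_1)
qed

end
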